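(* Let $T_1=(Q_1,\Sigma,\Delta,R_1,q_1^0)$ and $T_2=(Q_2,\Delta,\Omega,R_2,q_2^0)$ be top-down tree transducers, let $\hat{T}_1$ be the product construction of $T_1$ and the domain automaton of $T_2$, and let $M$ be the look-ahead transducer constructed from $T_1$ and $T_2$ as described in the context. Then $\mathcal{R}(\hat{T}_1)\circ\mathcal{R}(T_2)\subseteq\mathcal{R}(M)$.
   Context: A top-down tree transducer $T=(Q,\Sigma,\Delta,R,q_0)$ has finite state set $Q$, ranked input/output alphabets $\Sigma,\Delta$, initial state $q_0$, and finite rule set $R$ of rules $q(a(x_1,\dots,x_k))\to t$ with $a\in\Sigma_k$ ($\Sigma_k$ = symbols of rank $k$) and $t$ a tree over $\Delta$ whose leaves may additionally be of the form $q'(x_i)$, $q'\in Q$, $i\in[k]$; rules are used as rewrite rules in the usual way. $\mathcal{R}(T)$ is the set of pairs $(s,t)$ with $t$ a tree over $\Delta$ derivable from $q_0(s)$; $\mathcal{R}_1\circ\mathcal{R}_2=\{(s,u)\mid\exists t:(s,t)\in\mathcal{R}_1,(t,u)\in\mathcal{R}_2\}$. For $q\in Q$, $a\in\Sigma_k$, $\text{rhs}_T(q,a)$ is the set of right-hand sides of rules with left-hand side $q(a(x_1,\dots,x_k))$; for a right-hand side $\xi$ (resp. a set $\Gamma$ of right-hand sides), $\xi[x_i]$ (resp. $\Gamma[x_i]$) is the set of states $q'$ such that $q'(x_i)$ occurs in $\xi$ (resp. in some tree of $\Gamma$). Domain automaton of $T$: the top-down tree automaton (transducer over $\Sigma$ with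 rules of the form $p(a(x_1,\dots,x_k))\to a(p_1(x_1),\dots,p_k(x_k))$) with states all subsets of $Q$, initial state $\{q_0\}$, rules $S(a(x_1,\dots,x_k))\to a(S_1(x_1),\dots,S_k(x_k))$ for every $a\in\Sigma_k$, nonempty $S=\{q_1,\dots,q_n\}\subseteq Q$ and nonempty $\Gamma_j\subseteq\text{rhs}_T(q_j,a)$ ($j\in[n]$), where $S_i=\bigcup_j\Gamma_j[x_i]$, and rules $\emptyset(a(x_1,\dots,x_k))\to a(\emptyset(x_1),\dots,\emptyset(x_k))$ for all $a$; for an automaton state $l$, $\text{dom}(l)$ is the set of trees accepted from $l$. Product construction of transducers $T=(Q,\Sigma,\Delta,R,q_0)$ and $T'=(Q',\Delta,\Omega,R',q'_0)$: the transducer with states $Q\times Q'$, initial state $(q_0,q'_0)$, and, for every rule $q(a(x_1,\dots,x_k))\to\xi$ of $T$, every $p\in Q'$ and every tree $\zeta$ derivable from $p(\xi)$ using rules of $T'$ in which the leaves of $\xi$ of the form $q''(x_i)$ are treated as unrewritable symbols and a state $p'$ applied to such a leaf stays as $p'(q''(x_i))$, the rule $(q,p)(a(x_1,\dots,x_k))\to\zeta'$ (said to be obtained from the rule $q(a(x_1,\dots,x_k))\to\xi$ by translating $\xi$ with $p$), where $\zeta'$ replaces each $p'(q''(x_i))$ by $(q'',p')(x_i)$. A top-down tree transducer with look-ahead is a tuple $(Q,\Sigma,\Delta,R,q_0,B)$ where $B$ is a top-down tree automaton over $\Sigma$ with state set $L$ and rules have the form $q(a(x_1\!:\!l_1,\dots,x_k\!:\!l_k))\to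 t$ with $l_i\in L$; on input $s$, each node $v$ with label $a\in\Sigma_k$ is first relabeled by $\langle a,l_1,\dots,l_k\rangle$ where $l_i\in L$ are such that the $i$-th subtree of $v$ is in $\text{dom}(l_i)$, and the relabeled tree is then processed reading each rule as $q(\langle a,l_1,\dots,l_k\rangle(x_1,\dots,x_k))\to t$; the relation consists of all pairs $(s,r)$ with $r$ obtainable this way. Construction of $M$: let $\hat{T}_1$ be the product construction of $T_1$ and the domain automaton of $T_2$ (states written $(q,S)$ with $q\in Q_1$, $S\subseteq Q_2$), and $N$ the product construction of $\hat{T}_1$ and $T_2$ (states written $(q,S,q')$). The states of $M$ are the $(q,S,q')$ with $q'\in S$; its initial state is $(q_1^0,\{q_2^0\},q_2^0)$; its look-ahead automaton is the domain automaton $\hat{A}$ of $\hat{T}_1$. For every rule $(q,S,q')(a(x_1,\dots,x_k))\to\gamma$ of $N$ involving only such states, obtained from the rule $(q,S)(a(x_1,\dots,x_k))\to\xi$ of $\hat{T}_1$ by translating $\xi$ with $q'$, and for all states $l_1,\dots,l_k$ of $\hat{A}$ with $\xi[x_i]\subseteq l_i$ ($i\in[k]$), $M$ has the rule $(q,S,q')(a(x_1\!:\!l_1,\dots,x_k\!:\!l_k))\to\gamma$. *)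

theory Defs
  imports Main
begin

datatype 'f tree = Node 'f "'f tree list"

inductive_set trees :: "('f \<times> nat) set \<Rightarrow> 'f tree set" for \<Sigma> where
  "(f, length ts) \<in> \<Sigma> \<Longrightarrow> \<forall>t\<in>set ts. t \<in> trees \<Sigma> \<Longrightarrow> Node f ts \<in> trees \<Sigma>"

text \<open>Right-hand sides: trees over the output alphabet whose leaves may be
 q'(x_i); RState q i stands for q(x_i) (variables are 1-based).\<close>

datatype ('q, 'g) rhs = RNode 'g "('q, 'g) rhs list" | RState 'q nat

fun xstates :: "('q, 'g) rhs \<Rightarrow> nat \<Rightarrow> 'q set" where
  "xstates (RState q j) i = (if j = i then {q} else {})"
| "xstates (RNode g xs) i = (\<Union>x\<in>set xs. xstates x i)"

fun rstates :: "('q, 'g) rhs \<Rightarrow> 'q set" where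
  "rstates (RState q j) = {q}"
| "rstates (RNode g xs) = (\<Union>x\<in>set xs. rstates x)"

fun wf_rhs :: "'q set \<Rightarrow> ('g \<times> nat) set \<Rightarrow> nat \<Rightarrow> ('q, 'g) rhs \<Rightarrow> bool" where
  "wf_rhs Q \<Delta> k (RState q i) = (q \<in> Q \<and> 1 \<le> i \<and> i \<le> k)"
| "wf_rhs Q \<Delta> k (RNode g xs) = ((g, length xs) \<in> \<Delta> \<and> (\<forall>x\<in>set xs. wf_rhs Q \<Delta> k x))"

text \<open>A rule (q, (a,k), t) stands for q(a(x_1,...,x_k)) -> t.\<close>
record ('q, 'f, 'g) td =
  td_states :: "'q set"
  td_inp :: "('f \<times> nat) set"
  td_outp :: "('g \<times> nat) set"
  td_rules :: "('q \<times> ('f \<times> nat) \<times> ('q, 'g) rhs) set"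
  td_init :: 'q

definition wf_td :: "('q, 'f, 'g) td \<Rightarrow> bool" where
  "wf_td T \<longleftrightarrow> finite (td_states T) \<and> finite (td_inp T) \<and> finite (td_outp T)
     \<and> finite (td_rules T) \<and> td_init T \<in> td_states T
     \<and> (\<forall>(q, (a, k), \<xi>) \<in> td_rules T. q \<in> td_states T \<and> (a, k) \<in> td_inp T
            \<and> wf_rhs (td_states T) (td_outp T) k \<xi>)"

definition rhs_of :: "('q, 'f, 'g) td \<Rightarrow> 'q \<Rightarrow> ('f \<times> nat) \<Rightarrow> ('q, 'g) rhs set" where
  "rhs_of T q a = {\<xi>. (q, a, \<xi>) \<in> td_rules T}"

text \<open>Rewriting semantics: td_run T q s t means the ground tree t is derivable
 from q(s); every occurrence of q'(x_i) is rewritten independently.\<close>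
inductive td_run :: "('q, 'f, 'g) td \<Rightarrow> 'q \<Rightarrow> 'f tree \<Rightarrow> 'g tree \<Rightarrow> bool"
  and td_inst :: "('q, 'f, 'g) td \<Rightarrow> 'f tree list \<Rightarrow> ('q, 'g) rhs \<Rightarrow> 'g tree \<Rightarrow> bool"
  for T where
  "(q, (a, length ss), \<xi>) \<in> td_rules T \<Longrightarrow> td_inst T ss \<xi> t \<Longrightarrow> td_run T q (Node a ss) t"
| "1 \<le> i \<Longrightarrow> i \<le> length ss \<Longrightarrow> td_run T q (ss ! (i - 1)) t \<Longrightarrow> td_inst T ss (RState q i) t"
| "list_all2 (td_inst T ss) xs ts \<Longrightarrow> td_inst T ss (RNode g xs) (Node g ts)"

definition Rel :: "('q, 'f, 'g) td \<Rightarrow> ('f tree \<times> 'g tree) set" where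
  "Rel T = {(s, t). s \<in> trees (td_inp T) \<and> t \<in> trees (td_outp T) \<and> td_run T (td_init T) s t}"

definition tdom :: "('l, 'f, 'f) td \<Rightarrow> 'l \<Rightarrow> 'f tree set" where
  "tdom B l = {s. \<exists>t. td_run B l s t}"

definition domA :: "('q, 'f, 'g) td \<Rightarrow> ('q set, 'f, 'f) td" where
  "domA T = \<lparr> td_states = Pow (td_states T), td_inp = td_inp T, td_outp = td_inp T,
     td_rules =
       {(S, (a, k), RNode a (map (\<lambda>i. RState (Ss i) i) [1..<Suc k])) | S a k Ss.
          (a, k) \<in> td_inp T \<and> S \<noteq> {} \<and> S \<subseteq> td_states T \<and>
          (\<exists>\<Gamma>. (\<forall>q\<in>S. \<Gamma> q \<noteq> {} \<and> \<Gamma> q \<subseteq> rhs_of T q (a, k)) \<and>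
               (\<forall>i. Ss i = (\<Union>q\<in>S. \<Union>\<xi>\<in>\<Gamma> q. xstates \<xi> i)))}
       \<union> {({}, (a, k), RNode a (map (\<lambda>i. RState {} i) [1..<Suc k])) | a k. (a, k) \<in> td_inp T},
     td_init = {td_init T} \<rparr>"

text \<open>transl T' p xi zeta: zeta (with leaves (q'',p')(x_i)) is obtained by translating
 the right-hand side xi with state p of T', treating the leaves q''(x_i) of xi as
 unrewritable symbols (a state p' reaching such a leaf stays as p'(q''(x_i))).\<close>
inductive transl :: "('q', 'g, 'h) td \<Rightarrow> 'q' \<Rightarrow> ('q, 'g) rhs \<Rightarrow> ('q \<times> 'q', 'h) rhs \<Rightarrow> bool"
  and transl_inst :: "('q', 'g, 'h) td \<Rightarrow> ('q, 'g) rhs list \<Rightarrow> ('q', 'h) rhs \<Rightarrow> ('q \<times> 'q', 'h) rhs \<Rightarrow> bool"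
  for T' where
  "transl T' p (RState q i) (RState (q, p) i)"
| "(p, (g, length xs), \<eta>) \<in> td_rules T' \<Longrightarrow> transl_inst T' xs \<eta> \<zeta> \<Longrightarrow> transl T' p (RNode g xs) \<zeta>"
| "1 \<le> j \<Longrightarrow> j \<le> length xs \<Longrightarrow> transl T' p' (xs ! (j - 1)) \<zeta> \<Longrightarrow> transl_inst T' xs (RState p' j) \<zeta>"
| "list_all2 (transl_inst T' xs) \<eta>s \<zeta>s \<Longrightarrow> transl_inst T' xs (RNode h \<eta>s) (RNode h \<zeta>s)"

definition prod_td :: "('q, 'f, 'g) td \<Rightarrow> ('q', 'g, 'h) td \<Rightarrow> ('q \<times> 'q', 'f, 'h) td" where
  "prod_td T T' = \<lparr> td_states = td_states T \<times> td_states T', td_inp = td_inp T,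
     td_outp = td_outp T',
     td_rules = {((q, p), a, \<zeta>) | q p a \<xi> \<zeta>.
                   (q, a, \<xi>) \<in> td_rules T \<and> p \<in> td_states T' \<and> transl T' p \<xi> \<zeta>},
     td_init = (td_init T, td_init T') \<rparr>"

text \<open>A rule (q, ((a, [l_1,...,l_k]), k), t) stands for
 q(a(x_1:l_1,...,x_k:l_k)) -> t; la_aut is the look-ahead automaton B.\<close>
record ('q, 'f, 'g, 'l) latd =
  la_states :: "'q set"
  la_inp :: "('f \<times> nat) set"
  la_outp :: "('g \<times> nat) set"
  la_rules :: "('q \<times> (('f \<times> 'l list) \<times> nat) \<times> ('q, 'g) rhs) set"
  la_init :: 'q
  la_aut :: "('l, 'f, 'f) td"

definition la_base :: "('q, 'f, 'g, 'l) latd \<Rightarrow> ('q, 'f \<times> 'l list, 'g) td" where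
  "la_base M = \<lparr> td_states = la_states M,
     td_inp = {((a, ls), k) | a ls k. (a, k) \<in> la_inp M \<and> length ls = k
                                   \<and> set ls \<subseteq> td_states (la_aut M)},
     td_outp = la_outp M, td_rules = la_rules M, td_init = la_init M \<rparr>"

inductive relabel :: "('l, 'f, 'f) td \<Rightarrow> 'f tree \<Rightarrow> ('f \<times> 'l list) tree \<Rightarrow> bool" for B where
  "length ls = length ss \<Longrightarrow>
   (\<forall>i<length ss. ls ! i \<in> td_states B \<and> ss ! i \<in> tdom B (ls ! i)) \<Longrightarrow>
   list_all2 (relabel B) ss ss' \<Longrightarrow> relabel B (Node a ss) (Node (a, ls) ss')"

definition Rel_la :: "('q, 'f, 'g, 'l) latd \<Rightarrow> ('f tree \<times> 'g tree) set" where
  "Rel_la M = {(s, r). s \<in> trees (la_inp M) \<and> r \<in> trees (la_outp M) \<and>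
      (\<exists>s'. relabel (la_aut M) s s' \<and> td_run (la_base M) (la_init M) s' r)}"

definition T1hat :: "('q1, 'f, 'g) td \<Rightarrow> ('q2, 'g, 'h) td \<Rightarrow> ('q1 \<times> 'q2 set, 'f, 'g) td" where
  "T1hat T1 T2 = prod_td T1 (domA T2)"

definition Mcon :: "('q1, 'f, 'g) td \<Rightarrow> ('q2, 'g, 'h) td
     \<Rightarrow> (('q1 \<times> 'q2 set) \<times> 'q2, 'f, 'h, ('q1 \<times> 'q2 set) set) latd" where
  "Mcon T1 T2 =
    (let Th = T1hat T1 T2; N = prod_td Th T2; A = domA Th;
         QM = {((q, S), q'). ((q, S), q') \<in> td_states N \<and> q' \<in> S} in
     \<lparr> la_states = QM, la_inp = td_inp T1, la_outp = td_outp T2,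
       la_rules = {(((q, S), q'), ((a, ls), k), \<gamma>) | q S q' a ls k \<gamma>.
          (((q, S), q'), (a, k), \<gamma>) \<in> td_rules N \<and> ((q, S), q') \<in> QM \<and> rstates \<gamma> \<subseteq> QM \<and>
          (\<exists>\<xi>. ((q, S), (a, k), \<xi>) \<in> td_rules Th \<and> transl T2 q' \<xi> \<gamma> \<and>
               length ls = k \<and> (\<forall>i<k. ls ! i \<in> td_states A \<and> xstates \<xi> (Suc i) \<subseteq> ls ! i))},
       la_init = ((td_init T1, {td_init T2}), td_init T2),
       la_aut = A \<rparr>)"

end

(* Let T1hat translate s into t and T2 translate t into u.  The given T1hat-run may have guessed
   sets of right-hand sides for the domain automaton of T2 that are too small for the T2-run, so
   only its T1-part is kept, and a new T1hat-run is built along it: whenever T2 is to process an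
   output node g(t_1,...,t_k) from the states of S, the domain automaton chooses for every q in S
   all right-hand sides of q at g that have an instance over t_1,...,t_k.  Every T2-run from a state
   of S then only uses chosen right-hand sides, so translating the T1hat-rules with T2 meets only
   states ((q'',S''),p') with p' in S'', i.e. yields rules of M.  Their look-ahead is the set of
   T1hat-states that have a run on the respective subtree, and the domain automaton of T1hat
   accepts every subtree from that set. *)

theory Submission
  imports Defs
begin

section \<open>Runs on right-hand sides\<close>

inductive_cases td_run_NodeE: "td_run T q (Node a ss) t"
inductive_cases td_inst_RStateE: "td_inst T ss (RState q i) t"
inductive_cases td_inst_RNodeE: "td_inst T ss (RNode g xs) t"

lemma obtain_list_nth:
  assumes "\<And>i. i < n \<Longrightarrow> \<exists>x. P i x"
  obtains xs where "length xs = n" and "\<forall>i<n. P i (xs ! i)"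
  using assms Skolem_list_nth[of n P] by blast

lemma xstates_subset_rstates: "xstates \<xi> i \<subseteq> rstates \<xi>"
  by (induction \<xi>) auto

lemma wf_rhs_rstates: "wf_rhs Q \<Delta> k \<xi> \<Longrightarrow> rstates \<xi> \<subseteq> Q"
  by (induction \<xi>) auto

lemma td_inst_xstates_run:
  "td_inst T ss \<xi> t \<Longrightarrow> q \<in> xstates \<xi> i \<Longrightarrow> \<exists>t'. td_run T q (ss ! (i - 1)) t'"
proof (induction \<xi> arbitrary: t)
  case (RNode g xs)
  from RNode.prems obtain ts x where "list_all2 (td_inst T ss) xs ts" "x \<in> set xs" "q \<in> xstates x i"
    by (auto elim: td_inst_RNodeE)
  with RNode.IH show ?case
    by (metis in_set_conv_nth list_all2_conv_all_nth)
qed (auto elim: td_inst_RStateE split: if_splits)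

lemma td_run_lhs_rstates:
  "td_run T q s t \<Longrightarrow> q \<in> fst ` td_rules T"
  "td_inst T ss \<xi> t \<Longrightarrow> rstates \<xi> \<subseteq> fst ` td_rules T"
  by (induction rule: td_run_td_inst.inducts)
     (force, simp, force simp: list_all2_conv_all_nth in_set_conv_nth)

lemma td_inst_RNode_upt:
  assumes "length ts = length ss" and "\<forall>j<length ss. td_run T (f (Suc j)) (ss ! j) (ts ! j)"
  shows "td_inst T ss (RNode a (map (\<lambda>i. RState (f i) i) [1..<Suc (length ss)])) (Node a ts)"
  using assms
  by (auto intro!: td_run_td_inst.intros simp: list_all2_conv_all_nth simp del: upt_Suc)

lemma transl_inst_RNode_upt:
  assumes "length \<zeta>s = length xs" and "\<forall>j<length xs. transl T' (f (Suc j)) (xs ! j) (\<zeta>s ! j)"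
  shows "transl_inst T' xs (RNode a (map (\<lambda>i. RState (f i) i) [1..<Suc (length xs)])) (RNode a \<zeta>s)"
  using assms
  by (auto intro!: transl_transl_inst.intros simp: list_all2_conv_all_nth simp del: upt_Suc)

section \<open>Closed rule sets and domain automata\<close>

lemma td_states_domA [simp]: "td_states (domA T) = Pow (td_states T)"
  by (simp add: domA_def)

definition rules_closed :: "('q, 'f, 'g) td \<Rightarrow> bool" where
  "rules_closed T \<longleftrightarrow> (\<forall>(q, a, \<xi>) \<in> td_rules T. q \<in> td_states T \<and> rstates \<xi> \<subseteq> td_states T)"

lemma wf_td_rules_closed: "wf_td T \<Longrightarrow> rules_closed T"
  unfolding wf_td_def rules_closed_def by (fast dest: wf_rhs_rstates)

lemma rules_closed_domA:
  assumes "rules_closed T"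
  shows "rules_closed (domA T)"
  unfolding rules_closed_def
proof (clarify)
  fix S a k \<eta>
  assume "(S, (a, k), \<eta>) \<in> td_rules (domA T)"
  then consider \<Gamma> where "S \<subseteq> td_states T" "\<forall>q\<in>S. \<Gamma> q \<subseteq> rhs_of T q (a, k)"
      "\<eta> = RNode a (map (\<lambda>i. RState (\<Union>q\<in>S. \<Union>\<xi>\<in>\<Gamma> q. xstates \<xi> i) i) [1..<Suc k])"
    | "S = {}" "\<eta> = RNode a (map (\<lambda>i. RState {} i) [1..<Suc k])"
    unfolding domA_def by (auto simp del: upt_Suc) blast
  then show "S \<in> td_states (domA T) \<and> rstates \<eta> \<subseteq> td_states (domA T)"
  proof cases
    case 1
    have "(\<Union>q\<in>S. \<Union>\<xi>\<in>\<Gamma> q. xstates \<xi> i) \<subseteq> td_states T" for i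
      using 1 assms xstates_subset_rstates unfolding rules_closed_def rhs_of_def by fast
    with 1 show ?thesis by (auto simp: domA_def simp del: upt_Suc) blast
  qed (auto simp: domA_def simp del: upt_Suc)
qed

lemma transl_rstates:
  "transl T' p \<xi> \<zeta> \<Longrightarrow> rules_closed T' \<Longrightarrow> p \<in> td_states T'
     \<Longrightarrow> rstates \<zeta> \<subseteq> rstates \<xi> \<times> td_states T'"
  "transl_inst T' xs \<eta> \<zeta> \<Longrightarrow> rules_closed T' \<Longrightarrow> rstates \<eta> \<subseteq> td_states T'
     \<Longrightarrow> rstates \<zeta> \<subseteq> (\<Union>x\<in>set xs. rstates x) \<times> td_states T'"
proof (induction rule: transl_transl_inst.inducts)
  case (2 p g xs \<eta> \<zeta>)
  then show ?case by (fastforce simp: rules_closed_def)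
next
  case (3 j xs p' \<zeta>)
  then have "xs ! (j - 1) \<in> set xs" and "rstates \<zeta> \<subseteq> rstates (xs ! (j - 1)) \<times> td_states T'"
    by simp_all
  then show ?case by auto
next
  case (4 xs \<eta>s \<zeta>s h)
  have "rstates (\<zeta>s ! k) \<subseteq> (\<Union>x\<in>set xs. rstates x) \<times> td_states T'" if "k < length \<zeta>s" for k
  proof -
    from 4 that have "rstates (\<eta>s ! k) \<subseteq> td_states T'"
      by (force simp: list_all2_conv_all_nth)
    with 4 that show ?thesis
      by (simp add: list_all2_conv_all_nth)
  qed
  then show ?case
    unfolding rstates.simps by (metis UN_least in_set_conv_nth)
qed auto

lemma rules_closed_prod_td:
  assumes "rules_closed T" and "rules_closed T'"
  shows "rules_closed (prod_td T T')"
  unfolding rules_closed_def prod_td_def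
proof clarsimp
  fix q p a \<xi> \<zeta>
  assume "(q, a, \<xi>) \<in> td_rules T" "p \<in> td_states T'" "transl T' p \<xi> \<zeta>"
  with assms transl_rstates(1)[of T' p \<xi> \<zeta>]
  show "q \<in> td_states T \<and> rstates \<zeta> \<subseteq> td_states T \<times> td_states T'"
    unfolding rules_closed_def by fastforce
qed

definition dom_states :: "('q, 'f, 'g) td \<Rightarrow> 'f tree \<Rightarrow> 'q set" where
  "dom_states T s = {q \<in> td_states T. \<exists>t. td_run T q s t}"

lemma xstates_subset_dom_states:
  assumes "rules_closed T" and "td_inst T ss \<xi> t"
  shows "xstates \<xi> (Suc i) \<subseteq> dom_states T (ss ! i)"
proof
  fix p assume p: "p \<in> xstates \<xi> (Suc i)"
  then have "p \<in> fst ` td_rules T"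
    using xstates_subset_rstates td_run_lhs_rstates(2)[OF assms(2)] by fast
  with assms(1) have "p \<in> td_states T"
    unfolding rules_closed_def by auto
  moreover obtain t' where "td_run T p (ss ! i) t'"
    using td_inst_xstates_run[OF assms(2) p] by auto
  ultimately show "p \<in> dom_states T (ss ! i)"
    unfolding dom_states_def by blast
qed

text \<open>The sets \<open>S\<^sub>i\<close> of the domain-automaton rule for \<open>S\<close> at \<open>a(ss)\<close> when every
  \<open>\<Gamma>\<^sub>q\<close> is chosen as large as possible: all right-hand sides of \<open>q\<close> at \<open>a\<close> that have an
  instance over \<open>ss\<close>.\<close>
definition live_states :: "('q, 'f, 'g) td \<Rightarrow> 'q set \<Rightarrow> 'f \<Rightarrow> 'f tree list \<Rightarrow> nat \<Rightarrow> 'q set" where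
  "live_states T S a ss i =
     (\<Union>q\<in>S. \<Union>\<xi>\<in>{\<xi>. (q, (a, length ss), \<xi>) \<in> td_rules T \<and> (\<exists>t. td_inst T ss \<xi> t)}. xstates \<xi> i)"

lemma xstates_subset_live_states:
  "q \<in> S \<Longrightarrow> (q, (a, length ss), \<xi>) \<in> td_rules T \<Longrightarrow> td_inst T ss \<xi> t
     \<Longrightarrow> xstates \<xi> i \<subseteq> live_states T S a ss i"
  unfolding live_states_def by blast

lemma live_states_subset_dom_states:
  assumes "rules_closed T"
  shows "live_states T S a ss (Suc j) \<subseteq> dom_states T (ss ! j)"
  unfolding live_states_def using xstates_subset_dom_states[OF assms] by blast

lemma domA_ruleI:
  assumes "(a, k) \<in> td_inp T" and "S \<subseteq> td_states T"
    and "\<forall>q\<in>S. \<Gamma> q \<noteq> {} \<and> \<Gamma> q \<subseteq> rhs_of T q (a, k)"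
  shows "(S, (a, k), RNode a (map (\<lambda>i. RState (\<Union>q\<in>S. \<Union>\<xi>\<in>\<Gamma> q. xstates \<xi> i) i) [1..<Suc k]))
           \<in> td_rules (domA T)"
proof (cases "S = {}")
  case True
  with assms(1) show ?thesis by (simp add: domA_def)
next
  case False
  show ?thesis
    unfolding domA_def td.simps
    by (rule UnI1, rule CollectI,
        intro exI[of _ S] exI[of _ a] exI[of _ k] exI[of _ "\<lambda>i. \<Union>q\<in>S. \<Union>\<xi>\<in>\<Gamma> q. xstates \<xi> i"])
      (use assms False in blast)
qed

lemma domA_rule_live_states:
  assumes "(a, length ss) \<in> td_inp T" and "S \<subseteq> dom_states T (Node a ss)"
  shows "(S, (a, length ss),
           RNode a (map (\<lambda>i. RState (live_states T S a ss i) i) [1..<Suc (length ss)]))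
         \<in> td_rules (domA T)"
proof -
  define \<Gamma> where "\<Gamma> q = {\<xi>. (q, (a, length ss), \<xi>) \<in> td_rules T \<and> (\<exists>t. td_inst T ss \<xi> t)}" for q
  have "\<Gamma> q \<noteq> {}" if "q \<in> S" for q
  proof -
    from that assms(2) obtain t where "td_run T q (Node a ss) t"
      by (auto simp: dom_states_def)
    then show ?thesis unfolding \<Gamma>_def by (blast elim: td_run_NodeE)
  qed
  moreover have "\<Gamma> q \<subseteq> rhs_of T q (a, length ss)" for q
    by (auto simp: \<Gamma>_def rhs_of_def)
  moreover have "live_states T S a ss = (\<lambda>i. \<Union>q\<in>S. \<Union>\<xi>\<in>\<Gamma> q. xstates \<xi> i)"
    by (simp add: live_states_def \<Gamma>_def fun_eq_iff)
  moreover have "S \<subseteq> td_states T"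
    using assms(2) by (auto simp: dom_states_def)
  ultimately show ?thesis
    using domA_ruleI[OF assms(1)] by simp
qed

lemma tdom_domA:
  assumes "rules_closed T"
  shows "s \<in> trees (td_inp T) \<Longrightarrow> L \<subseteq> dom_states T s \<Longrightarrow> s \<in> tdom (domA T) L"
proof (induction s arbitrary: L rule: trees.induct)
  case (1 a ss)
  let ?L = "live_states T L a ss"
  have "\<exists>r. td_run (domA T) (?L (Suc j)) (ss ! j) r" if "j < length ss" for j
    using 1(2) that live_states_subset_dom_states[OF assms] by (auto simp: tdom_def)
  then obtain rs where "length rs = length ss"
      and "\<forall>j<length ss. td_run (domA T) (?L (Suc j)) (ss ! j) (rs ! j)"
    by (rule obtain_list_nth)
  then have "td_inst (domA T) ss
      (RNode a (map (\<lambda>i. RState (?L i) i) [1..<Suc (length ss)])) (Node a rs)"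
    by (rule td_inst_RNode_upt)
  with domA_rule_live_states[OF 1(1) 1(3)] show ?case
    unfolding tdom_def by (blast intro: td_run_td_inst.intros)
qed

fun dom_relabel :: "('q, 'f, 'g) td \<Rightarrow> 'f tree \<Rightarrow> ('f \<times> 'q set list) tree" where
  "dom_relabel T (Node a ss) = Node (a, map (dom_states T) ss) (map (dom_relabel T) ss)"

lemma relabel_dom_relabel:
  assumes "rules_closed T"
  shows "s \<in> trees (td_inp T) \<Longrightarrow> relabel (domA T) s (dom_relabel T s)"
proof (induction s rule: trees.induct)
  case (1 a ss)
  have "ss ! i \<in> tdom (domA T) (dom_states T (ss ! i))" if "i < length ss" for i
    using 1(2) that by (intro tdom_domA[OF assms]) auto
  with 1(2) show ?case
    by (auto intro!: relabel.intros simp: list_all2_conv_all_nth dom_states_def)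
qed

fun rhs_subst :: "('p, 'g) rhs \<Rightarrow> ('q, 'g) rhs list \<Rightarrow> ('q, 'g) rhs" where
  "rhs_subst (RState p j) xs = xs ! (j - 1)"
| "rhs_subst (RNode h \<eta>s) xs = RNode h (map (\<lambda>\<eta>. rhs_subst \<eta> xs) \<eta>s)"

lemma map_nth_upt_pred: "map (\<lambda>i. xs ! (i - Suc 0)) [Suc 0..<Suc (length xs)] = xs"
  by (rule nth_equalityI) (simp_all del: upt_Suc)

lemma rhs_subst_domA_rule:
  "(S, (a, k), \<eta>) \<in> td_rules (domA T) \<Longrightarrow> length xs = k \<Longrightarrow> rhs_subst \<eta> xs = RNode a xs"
  unfolding domA_def by (auto simp: comp_def map_nth_upt_pred simp del: upt_Suc)

lemma transl_domA_map_fst: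
  "transl (domA T) S \<xi> \<zeta> \<Longrightarrow> map_rhs fst id \<zeta> = \<xi>"
  "transl_inst (domA T) xs \<eta> \<zeta> \<Longrightarrow> map_rhs fst id \<zeta> = rhs_subst \<eta> xs"
proof (induction rule: transl_transl_inst.inducts)
  case (4 xs \<eta>s \<zeta>s h)
  then show ?case by (auto simp: list_all2_conv_all_nth intro: nth_equalityI)
qed (auto simp: rhs_subst_domA_rule)

lemma td_run_prod_domA_fst:
  "td_run (prod_td T (domA T')) x s t \<Longrightarrow> td_run T (fst x) s t"
  "td_inst (prod_td T (domA T')) ss \<zeta> t \<Longrightarrow> td_inst T ss (map_rhs fst id \<zeta>) t"
proof (induction rule: td_run_td_inst.inducts)
  case (1 x a ss \<zeta> t)
  then obtain \<xi> where rule: "(fst x, (a, length ss), \<xi>) \<in> td_rules T"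
    and "transl (domA T') (snd x) \<xi> \<zeta>"
    by (auto simp: prod_td_def)
  then have "map_rhs fst id \<zeta> = \<xi>"
    by (intro transl_domA_map_fst(1))
  with 1(3) have "td_inst T ss \<xi> t" by (simp only:)
  with rule show ?case by (rule td_run_td_inst.intros(1))
next
  case (3 ss xs ts g)
  then have "list_all2 (td_inst T ss) (map (map_rhs fst id) xs) ts"
    by (simp add: list_all2_map1 list_all2_mono id_def)
  then show ?case by (simp add: td_run_td_inst.intros(3) id_def)
qed (auto intro: td_run_td_inst.intros)

section \<open>Composition\<close>

lemma transl_inst_td_inst:
  assumes "td_inst T ts \<eta> u" and "length \<zeta>s = length ts"
    and "\<And>j p u'. j < length ts \<Longrightarrow> p \<in> xstates \<eta> (Suc j) \<Longrightarrow> td_run T p (ts ! j) u'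
           \<Longrightarrow> \<exists>\<gamma>. transl T p (\<zeta>s ! j) \<gamma> \<and> td_inst U ss \<gamma> u'"
  shows "\<exists>\<gamma>. transl_inst T \<zeta>s \<eta> \<gamma> \<and> td_inst U ss \<gamma> u"
  using assms(1,3)
proof (induction \<eta> arbitrary: u)
  case (RState p i)
  then have i: "1 \<le> i" "i \<le> length ts" and "td_run T p (ts ! (i - 1)) u"
    by (auto elim: td_inst_RStateE)
  moreover have "i - 1 < length ts" "p \<in> xstates (RState p i) (Suc (i - 1))"
    using i by simp_all
  ultimately obtain \<gamma> where "transl T p (\<zeta>s ! (i - 1)) \<gamma>" "td_inst U ss \<gamma> u"
    using RState.prems(2) by blast
  moreover from this(1) i assms(2) have "transl_inst T \<zeta>s (RState p i) \<gamma>"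
    by (intro transl_transl_inst.intros(3)) simp_all
  ultimately show ?case by blast
next
  case (RNode h \<eta>s)
  from RNode.prems(1) obtain us where u: "u = Node h us" and us: "list_all2 (td_inst T ts) \<eta>s us"
    by (auto elim: td_inst_RNodeE)
  have "\<exists>\<gamma>. transl_inst T \<zeta>s (\<eta>s ! k) \<gamma> \<and> td_inst U ss \<gamma> (us ! k)" if "k < length \<eta>s" for k
  proof (rule RNode.IH)
    show "\<eta>s ! k \<in> set \<eta>s" and "td_inst T ts (\<eta>s ! k) (us ! k)"
      using that us by (auto simp: list_all2_conv_all_nth)
  next
    fix j p u'
    assume "j < length ts" "p \<in> xstates (\<eta>s ! k) (Suc j)" "td_run T p (ts ! j) u'"
    moreover from this(2) that have "p \<in> xstates (RNode h \<eta>s) (Suc j)"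
      by auto
    ultimately show "\<exists>\<gamma>. transl T p (\<zeta>s ! j) \<gamma> \<and> td_inst U ss \<gamma> u'"
      using RNode.prems(2) by blast
  qed
  then obtain \<gamma>s where "length \<gamma>s = length \<eta>s"
    and \<gamma>s: "\<forall>k<length \<eta>s. transl_inst T \<zeta>s (\<eta>s ! k) (\<gamma>s ! k) \<and> td_inst U ss (\<gamma>s ! k) (us ! k)"
    by (rule obtain_list_nth)
  with us have "list_all2 (transl_inst T \<zeta>s) \<eta>s \<gamma>s" "list_all2 (td_inst U ss) \<gamma>s us"
    by (auto simp: list_all2_conv_all_nth)
  then show ?case
    unfolding u by (blast intro: transl_transl_inst.intros(4) td_run_td_inst.intros(3))
qed

locale composable =
  fixes T1 :: "('q1, 'f, 'g) td" and T2 :: "('q2, 'g, 'h) td"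
  assumes wf1: "wf_td T1" and wf2: "wf_td T2" and io: "td_inp T2 = td_outp T1"
begin

abbreviation "T1h \<equiv> T1hat T1 T2"
abbreviation "M \<equiv> la_base (Mcon T1 T2)"

lemma T1hat_simps:
  "td_states T1h = td_states T1 \<times> Pow (td_states T2)" "td_inp T1h = td_inp T1"
  "td_init T1h = (td_init T1, {td_init T2})"
  by (simp_all add: T1hat_def prod_td_def domA_def)

lemma Mcon_simps:
  "la_init (Mcon T1 T2) = ((td_init T1, {td_init T2}), td_init T2)"
  "la_aut (Mcon T1 T2) = domA T1h" "la_inp (Mcon T1 T2) = td_inp T1"
  "la_outp (Mcon T1 T2) = td_outp T2"
  by (simp_all add: Mcon_def Let_def)

lemma rules_closed_T1hat: "rules_closed T1h"
  unfolding T1hat_def using wf1 wf2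
  by (intro rules_closed_prod_td rules_closed_domA wf_td_rules_closed)

lemma T1hat_ruleI:
  "(q, (a, k), \<xi>) \<in> td_rules T1 \<Longrightarrow> S \<subseteq> td_states T2 \<Longrightarrow> transl (domA T2) S \<xi> \<zeta>
     \<Longrightarrow> ((q, S), (a, k), \<zeta>) \<in> td_rules T1h"
  by (auto simp: T1hat_def prod_td_def)

lemma Mcon_lhs_states:
  "fst ` td_rules M \<subseteq> {((q, S), p). (q, S) \<in> td_states T1h \<and> p \<in> td_states T2 \<and> p \<in> S}"
  by (auto simp: Mcon_def Let_def la_base_def prod_td_def)

lemma Mcon_ruleI:
  assumes rule: "((q, S), (a, length ss), \<zeta>) \<in> td_rules T1h" and "p \<in> S"
    and "transl T2 p \<zeta> \<gamma>" and "td_inst M ss' \<gamma> u" and "td_inst T1h ss \<zeta> t"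
  shows "(((q, S), p), ((a, map (dom_states T1h) ss), length ss), \<gamma>) \<in> td_rules M"
proof -
  have "(q, S) \<in> td_states T1h"
    using rule rules_closed_T1hat unfolding rules_closed_def by fast
  moreover have "rstates \<gamma> \<subseteq> {((q, S), p). (q, S) \<in> td_states T1h \<and> p \<in> td_states T2 \<and> p \<in> S}"
    using td_run_lhs_rstates(2)[OF assms(4)] Mcon_lhs_states by blast
  moreover have "\<forall>i<length ss. xstates \<zeta> (Suc i) \<subseteq> dom_states T1h (ss ! i)"
    using rules_closed_T1hat assms(5) xstates_subset_dom_states by blast
  ultimately show ?thesis
    using assms(1-3)
    by (auto simp: Mcon_def Let_def la_base_def prod_td_def dom_states_def T1hat_simps)
qed

definition simulates :: "'q1 \<Rightarrow> 'q2 set \<Rightarrow> 'f tree \<Rightarrow> 'g tree \<Rightarrow> bool" where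
  "simulates q S s t \<longleftrightarrow> (\<exists>t'. td_run T1h (q, S) s t') \<and>
     (\<forall>p\<in>S. \<forall>u. td_run T2 p t u \<longrightarrow> td_run M ((q, S), p) (dom_relabel T1h s) u)"

definition simulates_rhs ::
    "'f tree list \<Rightarrow> 'q2 set \<Rightarrow> ('q1, 'g) rhs \<Rightarrow> 'g tree \<Rightarrow> ('q1 \<times> 'q2 set, 'g) rhs \<Rightarrow> bool" where
  "simulates_rhs ss S \<xi> t \<zeta> \<longleftrightarrow> transl (domA T2) S \<xi> \<zeta> \<and> (\<exists>t'. td_inst T1h ss \<zeta> t') \<and>
     (\<forall>p\<in>S. \<forall>u. td_run T2 p t u \<longrightarrow>
        (\<exists>\<gamma>. transl T2 p \<zeta> \<gamma> \<and> td_inst M (map (dom_relabel T1h) ss) \<gamma> u))"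

lemma simulates_rhs_RState:
  assumes "simulates q S (ss ! (i - 1)) t" and "1 \<le> i" and "i \<le> length ss"
  shows "simulates_rhs ss S (RState q i) t (RState (q, S) i)"
  using assms unfolding simulates_def simulates_rhs_def
  by (auto intro!: transl_transl_inst.intros(1) td_run_td_inst.intros(2))

lemma simulates_rhs_RNode:
  assumes "(g, length ts) \<in> td_inp T2" and S: "S \<subseteq> dom_states T2 (Node g ts)"
    and "length xs = length ts" and "length \<zeta>s = length ts"
    and sim: "\<forall>j<length ts.
                simulates_rhs ss (live_states T2 S g ts (Suc j)) (xs ! j) (ts ! j) (\<zeta>s ! j)"
  shows "simulates_rhs ss S (RNode g xs) (Node g ts) (RNode g \<zeta>s)"
  unfolding simulates_rhs_def
proof (intro conjI ballI allI impI)
  let ?Ss = "live_states T2 S g ts"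
  have "transl_inst (domA T2) xs
      (RNode g (map (\<lambda>i. RState (?Ss i) i) [1..<Suc (length xs)])) (RNode g \<zeta>s)"
    using assms(3-5) by (intro transl_inst_RNode_upt) (auto simp: simulates_rhs_def)
  with domA_rule_live_states[OF assms(1) S] assms(3)
  show "transl (domA T2) S (RNode g xs) (RNode g \<zeta>s)"
    by (auto intro: transl_transl_inst.intros(2))
  have "\<exists>t'. td_inst T1h ss (\<zeta>s ! j) t'" if "j < length \<zeta>s" for j
    using sim assms(4) that by (auto simp: simulates_rhs_def)
  then obtain ts' where "length ts' = length \<zeta>s"
      and "\<forall>j<length \<zeta>s. td_inst T1h ss (\<zeta>s ! j) (ts' ! j)"
    by (rule obtain_list_nth)
  then have "td_inst T1h ss (RNode g \<zeta>s) (Node g ts')"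
    by (intro td_run_td_inst.intros(3)) (simp add: list_all2_conv_all_nth)
  then show "\<exists>t'. td_inst T1h ss (RNode g \<zeta>s) t'" ..
next
  fix p u assume "p \<in> S" and "td_run T2 p (Node g ts) u"
  then obtain \<eta> where rule: "(p, (g, length ts), \<eta>) \<in> td_rules T2" and inst: "td_inst T2 ts \<eta> u"
    by (auto elim: td_run_NodeE)
  have "\<exists>\<gamma>. transl T2 p' (\<zeta>s ! j) \<gamma> \<and> td_inst M (map (dom_relabel T1h) ss) \<gamma> u'"
    if "j < length ts" "p' \<in> xstates \<eta> (Suc j)" "td_run T2 p' (ts ! j) u'" for j p' u'
  proof -
    have "p' \<in> live_states T2 S g ts (Suc j)"
      using xstates_subset_live_states[OF \<open>p \<in> S\<close> rule inst] that(2) by blast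
    with sim that(1,3) show ?thesis
      unfolding simulates_rhs_def by blast
  qed
  then obtain \<gamma> where "transl_inst T2 \<zeta>s \<eta> \<gamma>"
      and M_inst: "td_inst M (map (dom_relabel T1h) ss) \<gamma> u"
    using transl_inst_td_inst[OF inst assms(4)] by blast
  with rule have "transl T2 p (RNode g \<zeta>s) \<gamma>"
    by (intro transl_transl_inst.intros(2)) (simp_all add: assms(4))
  with M_inst show "\<exists>\<gamma>. transl T2 p (RNode g \<zeta>s) \<gamma> \<and> td_inst M (map (dom_relabel T1h) ss) \<gamma> u"
    by blast
qed

lemma ex_simulates_rhs:
  assumes IH: "\<And>s q t S. s \<in> set ss \<Longrightarrow> td_run T1 q s t \<Longrightarrow> S \<subseteq> dom_states T2 t
                  \<Longrightarrow> simulates q S s t"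
  shows "wf_rhs (td_states T1) (td_outp T1) (length ss) \<xi> \<Longrightarrow> td_inst T1 ss \<xi> t
           \<Longrightarrow> S \<subseteq> dom_states T2 t \<Longrightarrow> \<exists>\<zeta>. simulates_rhs ss S \<xi> t \<zeta>"
proof (induction \<xi> arbitrary: t S)
  case (RState q i)
  then have "1 \<le> i" "i \<le> length ss" "td_run T1 q (ss ! (i - 1)) t"
    by (auto elim: td_inst_RStateE)
  moreover have "ss ! (i - 1) \<in> set ss"
    using \<open>1 \<le> i\<close> \<open>i \<le> length ss\<close> by simp
  ultimately have "simulates q S (ss ! (i - 1)) t"
    using IH RState.prems(3) by blast
  with \<open>1 \<le> i\<close> \<open>i \<le> length ss\<close> show ?case
    by (blast intro: simulates_rhs_RState)
next
  case (RNode g xs)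
  from RNode.prems(2) obtain ts where t: "t = Node g ts" and ts: "list_all2 (td_inst T1 ss) xs ts"
    by (auto elim: td_inst_RNodeE)
  let ?Ss = "live_states T2 S g ts"
  have "\<exists>\<zeta>. simulates_rhs ss (?Ss (Suc j)) (xs ! j) (ts ! j) \<zeta>" if "j < length ts" for j
  proof (rule RNode.IH)
    show "xs ! j \<in> set xs" "td_inst T1 ss (xs ! j) (ts ! j)"
      using ts that by (auto simp: list_all2_conv_all_nth)
    show "wf_rhs (td_states T1) (td_outp T1) (length ss) (xs ! j)"
      using RNode.prems(1) \<open>xs ! j \<in> set xs\<close> by simp
    show "?Ss (Suc j) \<subseteq> dom_states T2 (ts ! j)"
      using wf2 by (intro live_states_subset_dom_states wf_td_rules_closed)
  qed
  then obtain \<zeta>s where "length \<zeta>s = length ts"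
    "\<forall>j<length ts. simulates_rhs ss (?Ss (Suc j)) (xs ! j) (ts ! j) (\<zeta>s ! j)"
    by (rule obtain_list_nth)
  moreover have "(g, length ts) \<in> td_inp T2" "length xs = length ts"
    using RNode.prems(1) ts io by (auto dest: list_all2_lengthD)
  ultimately show ?case
    using simulates_rhs_RNode RNode.prems(3) unfolding t by blast
qed

lemma simulates_if_td_run:
  "td_run T1 q s t \<Longrightarrow> S \<subseteq> dom_states T2 t \<Longrightarrow> simulates q S s t"
proof (induction s arbitrary: q t S)
  case (Node a ss)
  from Node.prems(1) obtain \<xi> where rule: "(q, (a, length ss), \<xi>) \<in> td_rules T1"
    and inst: "td_inst T1 ss \<xi> t"
    by (auto elim: td_run_NodeE)
  have "wf_rhs (td_states T1) (td_outp T1) (length ss) \<xi>"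
    using rule wf1 unfolding wf_td_def by fast
  with Node.IH inst Node.prems(2) obtain \<zeta> where \<zeta>: "simulates_rhs ss S \<xi> t \<zeta>"
    using ex_simulates_rhs by blast
  then have T1h_rule: "((q, S), (a, length ss), \<zeta>) \<in> td_rules T1h"
    using rule Node.prems(2) unfolding simulates_rhs_def dom_states_def
    by (auto intro: T1hat_ruleI)
  from \<zeta> obtain t' where T1h_inst: "td_inst T1h ss \<zeta> t'"
    unfolding simulates_rhs_def by blast
  have "td_run M ((q, S), p) (dom_relabel T1h (Node a ss)) u" if "p \<in> S" "td_run T2 p t u" for p u
  proof -
    from \<zeta> that obtain \<gamma> where transl: "transl T2 p \<zeta> \<gamma>"
      and M_inst: "td_inst M (map (dom_relabel T1h) ss) \<gamma> u"
      unfolding simulates_rhs_def by blast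
    from T1h_rule that(1) transl M_inst T1h_inst
    have "(((q, S), p), ((a, map (dom_states T1h) ss), length ss), \<gamma>) \<in> td_rules M"
      by (rule Mcon_ruleI)
    with M_inst show ?thesis
      by (simp add: td_run_td_inst.intros(1))
  qed
  with T1h_rule T1h_inst show ?case
    unfolding simulates_def by (blast intro: td_run_td_inst.intros(1))
qed

end

theorem lemma4:
  fixes T1 :: "('q1, 'f, 'g) td" and T2 :: "('q2, 'g, 'h) td"
  assumes "wf_td T1" and "wf_td T2" and "td_inp T2 = td_outp T1"
  shows "Rel (T1hat T1 T2) O Rel T2 \<subseteq> Rel_la (Mcon T1 T2)"
proof clarify
  interpret composable T1 T2 using assms by unfold_locales
  fix s t u assume "(s, t) \<in> Rel T1h" and "(t, u) \<in> Rel T2"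
  then have s: "s \<in> trees (td_inp T1)" and u: "u \<in> trees (td_outp T2)"
    and "td_run T1h (td_init T1, {td_init T2}) s t" and run2: "td_run T2 (td_init T2) t u"
    by (auto simp: Rel_def T1hat_simps)
  then have "td_run T1 (td_init T1) s t"
    unfolding T1hat_def using td_run_prod_domA_fst(1) by fastforce
  moreover have "{td_init T2} \<subseteq> dom_states T2 t"
    using assms(2) run2 by (auto simp: dom_states_def wf_td_def)
  ultimately have "simulates (td_init T1) {td_init T2} s t"
    by (rule simulates_if_td_run)
  with run2 have "td_run M ((td_init T1, {td_init T2}), td_init T2) (dom_relabel T1h s) u"
    unfolding simulates_def by blast
  moreover have "relabel (domA T1h) s (dom_relabel T1h s)"
    using relabel_dom_relabel[OF rules_closed_T1hat] s by (simp add: T1hat_simps)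
  ultimately show "(s, u) \<in> Rel_la (Mcon T1 T2)"
    using s u by (auto simp: Rel_la_def Mcon_simps la_base_def)
qed

end
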